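(* Let $\mathcal{R}_1$ be the family of all south-west quadrants and $\mathcal{R}_2 = \{\{(x,y) \in \mathbb{R}^2 : a \leq x+y \leq b\} : a,b \in \mathbb{R}\}$ the family of all diagonal strips of slope $-1$. Then for $\mathcal{R} = \mathcal{R}_1 \cup \mathcal{R}_2$ we have $m_{\mathcal{R}}(2) = \infty$.
   Context: South-west quadrants: $\{\{(x,y) : x \leq a,\ y \leq b\} : a,b \in \mathbb{R}\}$. For finite $V \subset \mathbb{R}^2$, $\mathcal{H}(V,\mathcal{R},m)$ is the hypergraph on $V$ whose hyperedges are the sets $V \cap R$, $R \in \mathcal{R}$, of size exactly $m$. A coloring is polychromatic if every hyperedge contains each color. Point sets are in general position (pairwise distinct $x$-coordinates, $y$-coordinates and values $x+y$). $m_{\mathcal{R}}(k)$ is the smallest $m$ such that for every finite $V$ in general position $\mathcal{H}(V,\mathcal{R},m)$ admits a polychromatic $k$-coloring, and $\infty$ if no such $m$ exists. *)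

theory Defs
  imports Complex_Main "HOL-Library.Extended_Nat"
begin

type_synonym point = "real \<times> real"

definition sw_quadrants :: "point set set" where
  "sw_quadrants = {{p. fst p \<le> a \<and> snd p \<le> b} | a b. True}"

definition diag_strips :: "point set set" where
  "diag_strips = {{p. a \<le> fst p + snd p \<and> fst p + snd p \<le> b} | a b. True}"

definition hyperedges :: "point set \<Rightarrow> point set set \<Rightarrow> nat \<Rightarrow> point set set" where
  "hyperedges V R m = {V \<inter> S | S. S \<in> R \<and> card (V \<inter> S) = m}"

definition polychromatic_coloring :: "point set \<Rightarrow> point set set \<Rightarrow> nat \<Rightarrow> (point \<Rightarrow> nat) \<Rightarrow> bool" where
  "polychromatic_coloring V H k c \<longleftrightarrow>
     (\<forall>v\<in>V. c v < k) \<and> (\<forall>E\<in>H. \<forall>i<k. \<exists>v\<in>E. c v = i)"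

definition general_position :: "point set \<Rightarrow> bool" where
  "general_position V \<longleftrightarrow>
     inj_on fst V \<and> inj_on snd V \<and> inj_on (\<lambda>p. fst p + snd p) V"

definition m_good :: "point set set \<Rightarrow> nat \<Rightarrow> nat \<Rightarrow> bool" where
  "m_good R k m \<longleftrightarrow>
     (\<forall>V. finite V \<and> general_position V \<longrightarrow>
        (\<exists>c. polychromatic_coloring V (hyperedges V R m) k c))"

definition m_R :: "point set set \<Rightarrow> nat \<Rightarrow> enat" where
  "m_R R k = (if \<exists>m. m_good R k m then enat (LEAST m. m_good R k m) else \<infinity>)"

end

(*
  Color the nodes of the complete m-ary tree of height h = m - 1 with two colors so that
  every set of m siblings sees both colors. Starting at the root and always stepping to a
  child of the root's color produces a monochromatic root-to-leaf branch of m nodes. Hence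
  it suffices to place the nodes in general position so that every sibling set is cut out
  by a diagonal strip and every branch by a south-west quadrant.

  Node (d, a) covers the leaves b with a M <= b < (a + 1) M, where M = m^(h - d), and is
  placed at N (a M, -(a + 1) M) plus perturbations smaller than N. The quadrant below
  leaf b then contains exactly the nodes whose leaf interval contains b, i.e. its
  ancestors. On the other hand x + y = a + 2 d - N M, so the levels are separated by the
  term N M and ordered by a within a level, where siblings are consecutive.

  For m < 2 there is nothing to construct: a hyperedge of size m cannot carry two colors.
*)
theory Submission
  imports Defs
begin

definition tree_nodes :: "nat \<Rightarrow> nat \<Rightarrow> (nat \<times> nat) set" where
  "tree_nodes m h = (SIGMA d:{..h}. {..<m^d})"

definition children :: "nat \<Rightarrow> nat \<times> nat \<Rightarrow> (nat \<times> nat) set" where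
  "children m = (\<lambda>(d, a). (\<lambda>j. (Suc d, m * a + j)) ` {..<m})"

definition branch :: "nat \<Rightarrow> nat \<Rightarrow> nat \<Rightarrow> (nat \<times> nat) set" where
  "branch m h b = (\<lambda>d. (d, b div m^(h - d))) ` {..h}"

lemma mem_children_iff:
  "(d', a') \<in> children m (d, a) \<longleftrightarrow> d' = Suc d \<and> m * a \<le> a' \<and> a' < m * a + m"
  by (auto simp: children_def image_iff intro!: bexI[where x = "a' - m * a"])

lemma mem_branch_iff: "(d, a) \<in> branch m h b \<longleftrightarrow> d \<le> h \<and> a = b div m^(h - d)"
  by (auto simp: branch_def)

lemma finite_tree_nodes: "finite (tree_nodes m h)"
  by (simp add: tree_nodes_def)

lemma card_children: "card (children m (d, a)) = m"
  by (simp add: children_def card_image inj_on_def)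

lemma card_branch: "card (branch m h b) = Suc h"
  by (simp add: branch_def card_image inj_on_def)

lemma mult_add_less_power_Suc:
  fixes m :: nat assumes "a < m^d" "j < m" shows "m * a + j < m^Suc d"
proof -
  have "m * a + j < m * (a + 1)" using assms(2) by simp
  also have "\<dots> \<le> m * m^d" using assms(1) by (intro mult_left_mono) auto
  finally show ?thesis by simp
qed

lemma children_subset_tree_nodes:
  assumes "d < h" "a < m^d" shows "children m (d, a) \<subseteq> tree_nodes m h"
  using assms mult_add_less_power_Suc by (auto simp: children_def tree_nodes_def)

lemma branch_subset_tree_nodes:
  fixes m :: nat assumes "b < m^h" shows "branch m h b \<subseteq> tree_nodes m h"
proof
  fix p assume "p \<in> branch m h b"
  then obtain d where d: "d \<le> h" "p = (d, b div m^(h - d))" by (auto simp: branch_def)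
  have "0 < m^(h - d)" using assms d(1) by (cases "m = 0") (auto simp: power_0_left split: if_splits)
  moreover have "b < m^d * m^(h - d)" using assms d(1) by (simp flip: power_add)
  ultimately show "p \<in> tree_nodes m h"
    using d by (simp add: tree_nodes_def div_less_iff_less_mult)
qed

lemma branch_Suc:
  fixes m :: nat assumes "j < m"
  shows "branch m (Suc h) (m * b + j) = insert (Suc h, m * b + j) (branch m h b)"
proof -
  have "(m * b + j) div m^(Suc h - d) = b div m^(h - d)" if "d \<le> h" for d
    using that assms by (simp add: Suc_diff_le div_mult2_eq)
  then show ?thesis
    by (force simp: branch_def atMost_Suc)
qed

lemma monochromatic_branch:
  fixes m :: nat
  assumes "col (0, 0) = i"
    and "\<And>d a. d < h \<Longrightarrow> a < m^d \<Longrightarrow> \<exists>p\<in>children m (d, a). col p = i"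
  shows "\<exists>b<m^h. \<forall>p\<in>branch m h b. col p = i"
  using assms(2)
proof (induction h)
  case 0
  have "branch m 0 0 = {(0, 0)}" by (simp add: branch_def)
  then show ?case using assms(1) by auto
next
  case (Suc h)
  then obtain b where b: "b < m^h" "\<forall>p\<in>branch m h b. col p = i" by auto
  then obtain j where j: "j < m" "col (Suc h, m * b + j) = i"
    using Suc.prems[of h b] by (auto simp: children_def)
  have "\<forall>p\<in>branch m (Suc h) (m * b + j). col p = i"
    using b(2) j by (simp add: branch_Suc)
  then show ?case
    using mult_add_less_power_Suc[OF b(1) j(1)] by blast
qed

lemma tree_hyperedges_not_polychromatic:
  fixes m :: nat
  assumes "f (0, 0) \<in> V"
    and "\<And>d a. d < h \<Longrightarrow> a < m^d \<Longrightarrow> f ` children m (d, a) \<in> H"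
    and "\<And>b. b < m^h \<Longrightarrow> f ` branch m h b \<in> H"
  shows "\<not> polychromatic_coloring V H 2 c"
proof
  assume poly: "polychromatic_coloring V H 2 c"
  define i where "i = c (f (0, 0))"
  have "i < 2" using poly assms(1) by (simp add: polychromatic_coloring_def i_def)
  then have "\<exists>p\<in>children m (d, a). c (f p) = i" if "d < h" "a < m^d" for d a
    using poly assms(2)[OF that] by (auto simp: polychromatic_coloring_def)
  then obtain b where "b < m^h" and mono: "\<forall>p\<in>branch m h b. c (f p) = i"
    using monochromatic_branch[of "c \<circ> f" i h m] by (auto simp: i_def)
  then have "f ` branch m h b \<in> H" using assms(3) by blast
  moreover have "1 - i < 2" by simp
  ultimately obtain v where "v \<in> f ` branch m h b" "c v = 1 - i"
    using poly unfolding polychromatic_coloring_def by blast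
  then have "1 - i = i" using mono by auto
  then show False by arith
qed

lemma add_mult_le_add_mult_iff:
  fixes N u v p q :: nat
  assumes "p < N" "q < N"
  shows "N * u + p \<le> N * v + q \<longleftrightarrow> u < v \<or> u = v \<and> p \<le> q"
proof -
  have "N * x + r < N * y" if "x < y" "r < N" for x y r
  proof -
    have "N * x + r < N * Suc x" using that(2) by simp
    also have "\<dots> \<le> N * y" using that(1) by (intro mult_left_mono) auto
    finally show ?thesis .
  qed
  from this[of u v p] this[of v u q] assms show ?thesis
    by (cases u v rule: linorder_cases) auto
qed

lemma add_mult_eq_add_mult_iff:
  fixes N u v p q :: nat
  assumes "p < N" "q < N"
  shows "N * u + p = N * v + q \<longleftrightarrow> u = v \<and> p = q"
  using add_mult_le_add_mult_iff[OF assms] add_mult_le_add_mult_iff[OF assms(2,1)]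
  by (metis antisym_conv le_refl less_le_not_le)

lemma div_eq_iff_mult_le_less:
  fixes b n q :: nat
  assumes "0 < n"
  shows "b div n = q \<longleftrightarrow> q * n \<le> b \<and> b < (q + 1) * n"
proof -
  have "b div n = q \<longleftrightarrow> q \<le> b div n \<and> b div n < q + 1" by linarith
  then show ?thesis using assms by (simp add: less_eq_div_iff_mult_less_eq div_less_iff_less_mult)
qed

definition tree_scale :: "nat \<Rightarrow> nat \<Rightarrow> nat" where
  "tree_scale m h = m^h + 2 * h + 1"

definition tree_point :: "nat \<Rightarrow> nat \<Rightarrow> nat \<times> nat \<Rightarrow> point" where
  "tree_point m h = (\<lambda>(d, a).
     (real (tree_scale m h * (a * m^(h - d)) + (a + d)),
      real d - real (tree_scale m h * ((a + 1) * m^(h - d)))))"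

lemma fst_tree_point:
  "fst (tree_point m h (d, a)) = real (tree_scale m h * (a * m^(h - d)) + (a + d))"
  by (simp add: tree_point_def)

lemma snd_tree_point:
  "snd (tree_point m h (d, a)) = real d - real (tree_scale m h * ((a + 1) * m^(h - d)))"
  by (simp add: tree_point_def)

lemma fst_plus_snd_tree_point:
  "fst (tree_point m h (d, a)) + snd (tree_point m h (d, a))
     = real (a + 2 * d) - real (tree_scale m h * m^(h - d))"
  by (simp add: tree_point_def distrib_left distrib_right)

lemma less_tree_scale:
  fixes m :: nat
  assumes "0 < m" "d \<le> h" "a \<le> m^d"
  shows "a + 2 * d < tree_scale m h"
proof -
  have "m^d \<le> m^h" using assms(1,2) by (simp add: power_increasing)
  then show ?thesis using assms(2,3) by (simp add: tree_scale_def)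
qed

lemma tree_point_le_leaf_iff:
  fixes m :: nat
  assumes m: "0 < m" and node: "(d, a) \<in> tree_nodes m h" and leaf: "b < m^h"
  shows "fst (tree_point m h (d, a)) \<le> fst (tree_point m h (h, b)) \<and>
         snd (tree_point m h (d, a)) \<le> snd (tree_point m h (h, b))
     \<longleftrightarrow> b div m^(h - d) = a"
proof -
  define N where "N = tree_scale m h"
  define M where "M = m^(h - d)"
  have d: "d \<le> h" and a: "a < m^d" using node by (auto simp: tree_nodes_def)
  have M: "0 < M" using m by (simp add: M_def)
  have small: "a + d < N" "b + h < N"
    using less_tree_scale[OF m d, of a] less_tree_scale[of m h h b] m a leaf
    by (auto simp: N_def)
  have "fst (tree_point m h (d, a)) \<le> fst (tree_point m h (h, b))
      \<longleftrightarrow> N * (a * M) + (a + d) \<le> N * b + (b + h)"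
    unfolding fst_tree_point N_def M_def of_nat_le_iff by simp
  also have "\<dots> \<longleftrightarrow> a * M \<le> b"
  proof -
    have "a + d \<le> a * M + h" using M d by (intro add_mono) simp_all
    then show ?thesis using add_mult_le_add_mult_iff[OF small] by auto
  qed
  finally have x: "fst (tree_point m h (d, a)) \<le> fst (tree_point m h (h, b))
      \<longleftrightarrow> a * M \<le> b" .
  have "snd (tree_point m h (d, a)) \<le> snd (tree_point m h (h, b))
      \<longleftrightarrow> N * (b + 1) + d \<le> N * ((a + 1) * M) + h"
    unfolding snd_tree_point N_def M_def diff_self_eq_0 power_0 mult_1_right by linarith
  also have "\<dots> \<longleftrightarrow> b < (a + 1) * M"
    using add_mult_le_add_mult_iff[of d N h "b + 1" "(a + 1) * M"] small d by auto
  finally have y: "snd (tree_point m h (d, a)) \<le> snd (tree_point m h (h, b))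
      \<longleftrightarrow> b < (a + 1) * M" .
  show ?thesis using x y div_eq_iff_mult_le_less[OF M] by (simp add: M_def)
qed

lemma tree_point_in_children_strip_iff:
  fixes m :: nat
  assumes m: "2 \<le> m" and d: "d < h" "a < m^d" and node: "(d', a') \<in> tree_nodes m h"
  defines "s \<equiv> \<lambda>p. fst (tree_point m h p) + snd (tree_point m h p)"
  shows "s (Suc d, m * a) \<le> s (d', a') \<and> s (d', a') \<le> s (Suc d, m * a) + real m - 1
     \<longleftrightarrow> (d', a') \<in> children m (d, a)"
proof -
  define N where "N = tree_scale m h"
  define M where "M = m^(h - Suc d)"
  define M' where "M' = m^(h - d')"
  have d': "d' \<le> h" "a' < m^d'" using node by (auto simp: tree_nodes_def)
  have "m * a + m \<le> m^Suc d" using mult_add_less_power_Suc[OF d(2), of "m - 1"] m by simp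
  then have small: "m * a + m + 2 * Suc d < N" "a' + 1 + 2 * d' < N"
    using less_tree_scale[of m "Suc d" h "m * a + m"] less_tree_scale[of m d' h "a' + 1"] m d d'
    by (auto simp: N_def)
  have "s (Suc d, m * a) \<le> s (d', a')
      \<longleftrightarrow> N * M' + (m * a + 2 * Suc d) \<le> N * M + (a' + 2 * d')"
    unfolding s_def fst_plus_snd_tree_point N_def M_def M'_def by linarith
  also have "\<dots> \<longleftrightarrow> M' < M \<or> M' = M \<and> m * a + 2 * Suc d \<le> a' + 2 * d'"
    using small by (intro add_mult_le_add_mult_iff) auto
  finally have lower: "s (Suc d, m * a) \<le> s (d', a')
      \<longleftrightarrow> M' < M \<or> M' = M \<and> m * a + 2 * Suc d \<le> a' + 2 * d'" .
  have "s (d', a') \<le> s (Suc d, m * a) + real m - 1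
      \<longleftrightarrow> N * M + (a' + 1 + 2 * d') \<le> N * M' + (m * a + m + 2 * Suc d)"
    unfolding s_def fst_plus_snd_tree_point N_def M_def M'_def by linarith
  also have "\<dots> \<longleftrightarrow> M < M' \<or> M = M' \<and> a' + 1 + 2 * d' \<le> m * a + m + 2 * Suc d"
    using small by (intro add_mult_le_add_mult_iff) auto
  finally have upper: "s (d', a') \<le> s (Suc d, m * a) + real m - 1
      \<longleftrightarrow> M < M' \<or> M = M' \<and> a' + 1 + 2 * d' \<le> m * a + m + 2 * Suc d" .
  have "M' = M \<longleftrightarrow> h - d' = h - Suc d" using m by (simp add: M_def M'_def)
  also have "\<dots> \<longleftrightarrow> d' = Suc d" using d d' by arith
  finally have level: "M' = M \<longleftrightarrow> d' = Suc d" .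
  have "s (Suc d, m * a) \<le> s (d', a') \<and> s (d', a') \<le> s (Suc d, m * a) + real m - 1
      \<longleftrightarrow> M' = M \<and> m * a + 2 * Suc d \<le> a' + 2 * d' \<and> a' + 1 + 2 * d' \<le> m * a + m + 2 * Suc d"
    unfolding lower upper by auto
  also have "\<dots> \<longleftrightarrow> d' = Suc d \<and> m * a \<le> a' \<and> a' < m * a + m"
    unfolding level by auto
  finally show ?thesis by (simp only: mem_children_iff)
qed

lemma leftmost_leaf_index_le:
  fixes m :: nat
  assumes "0 < m" "d \<le> d'" "d' \<le> h" "a * m^(h - d) = a' * m^(h - d')"
  shows "a \<le> a'"
proof -
  have "m^(h - d) = m^(d' - d) * m^(h - d')" using assms(2,3) by (simp flip: power_add)
  then have "a' = a * m^(d' - d)" using assms(1,4) by simp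
  then show ?thesis using assms(1) by simp
qed

lemma inj_on_fst_tree_point:
  fixes m :: nat
  assumes m: "0 < m"
  shows "inj_on (fst \<circ> tree_point m h) (tree_nodes m h)"
proof (rule inj_onI, clarsimp)
  fix d a d' a'
  assume "(d, a) \<in> tree_nodes m h" "(d', a') \<in> tree_nodes m h"
    and eq: "fst (tree_point m h (d, a)) = fst (tree_point m h (d', a'))"
  then have d: "d \<le> h" "d' \<le> h" and small: "a + d < tree_scale m h" "a' + d' < tree_scale m h"
    using less_tree_scale[OF m, of d h a] less_tree_scale[OF m, of d' h a']
    by (auto simp: tree_nodes_def)
  have "a * m^(h - d) = a' * m^(h - d') \<and> a + d = a' + d'"
    using eq add_mult_eq_add_mult_iff[OF small] by (simp only: fst_tree_point of_nat_eq_iff)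
  then have leaf: "a * m^(h - d) = a' * m^(h - d')" and sum: "a + d = a' + d'" by auto
  show "d = d' \<and> a = a'"
  proof (cases "d \<le> d'")
    case True
    have "a \<le> a'" using leftmost_leaf_index_le[OF m True d(2) leaf] .
    then show ?thesis using True sum by auto
  next
    case False
    then have "a' \<le> a" using leftmost_leaf_index_le[OF m _ d(1) leaf[symmetric]] by simp
    then show ?thesis using False sum by auto
  qed
qed

lemma inj_on_snd_tree_point:
  fixes m :: nat
  assumes m: "0 < m"
  shows "inj_on (snd \<circ> tree_point m h) (tree_nodes m h)"
proof (rule inj_onI, clarsimp)
  fix d a d' a'
  assume "(d, a) \<in> tree_nodes m h" "(d', a') \<in> tree_nodes m h"
    and eq: "snd (tree_point m h (d, a)) = snd (tree_point m h (d', a'))"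
  then have d: "d \<le> h" "d' \<le> h" and small: "d < tree_scale m h" "d' < tree_scale m h"
    using less_tree_scale[OF m, of d h a] less_tree_scale[OF m, of d' h a']
    by (auto simp: tree_nodes_def)
  have "tree_scale m h * ((a + 1) * m^(h - d)) + d' = tree_scale m h * ((a' + 1) * m^(h - d')) + d"
    using eq unfolding snd_tree_point by linarith
  then have "d' = d" "(a + 1) * m^(h - d) = (a' + 1) * m^(h - d)"
    using add_mult_eq_add_mult_iff[OF small(2,1)] by auto
  then show "d = d' \<and> a = a'" using m by (simp only: mult_cancel2) simp
qed

lemma inj_on_fst_plus_snd_tree_point:
  fixes m :: nat
  assumes m: "2 \<le> m"
  shows "inj_on ((\<lambda>p. fst p + snd p) \<circ> tree_point m h) (tree_nodes m h)"
proof (rule inj_onI, clarsimp)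
  fix d a d' a'
  assume "(d, a) \<in> tree_nodes m h" "(d', a') \<in> tree_nodes m h"
    and eq: "fst (tree_point m h (d, a)) + snd (tree_point m h (d, a))
           = fst (tree_point m h (d', a')) + snd (tree_point m h (d', a'))"
  then have d: "d \<le> h" "d' \<le> h" and small: "a + 2 * d < tree_scale m h" "a' + 2 * d' < tree_scale m h"
    using less_tree_scale[of m d h a] less_tree_scale[of m d' h a'] m
    by (auto simp: tree_nodes_def)
  have "tree_scale m h * m^(h - d') + (a + 2 * d) = tree_scale m h * m^(h - d) + (a' + 2 * d')"
    using eq unfolding fst_plus_snd_tree_point by linarith
  then have "m^(h - d') = m^(h - d) \<and> a + 2 * d = a' + 2 * d'"
    using add_mult_eq_add_mult_iff[OF small] by blast
  then show "d = d' \<and> a = a'" using m d by auto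
qed

lemma general_position_tree_points:
  fixes m :: nat
  assumes "2 \<le> m"
  shows "general_position (tree_point m h ` tree_nodes m h)"
  using assms inj_on_fst_tree_point inj_on_snd_tree_point inj_on_fst_plus_snd_tree_point
  by (simp add: general_position_def inj_on_imageI)

lemma inj_on_tree_point: "0 < m \<Longrightarrow> inj_on (tree_point m h) (tree_nodes m h)"
  using inj_on_fst_tree_point by (rule inj_on_imageI2)

lemma image_Int_eq_image:
  assumes "X \<subseteq> N" "\<And>p. p \<in> N \<Longrightarrow> f p \<in> S \<longleftrightarrow> p \<in> X"
  shows "f ` N \<inter> S = f ` X"
  using assms by blast

lemma tree_points_in_quadrant:
  fixes m :: nat
  assumes m: "0 < m" and b: "b < m^h"
  defines "q \<equiv> tree_point m h (h, b)"
  shows "tree_point m h ` tree_nodes m h \<inter> {p. fst p \<le> fst q \<and> snd p \<le> snd q}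
       = tree_point m h ` branch m h b"
proof (rule image_Int_eq_image)
  show "branch m h b \<subseteq> tree_nodes m h" using b by (rule branch_subset_tree_nodes)
  fix p assume "p \<in> tree_nodes m h"
  then show "tree_point m h p \<in> {p. fst p \<le> fst q \<and> snd p \<le> snd q} \<longleftrightarrow> p \<in> branch m h b"
    using tree_point_le_leaf_iff[OF m _ b] by (cases p) (auto simp: q_def mem_branch_iff tree_nodes_def)
qed

lemma tree_points_in_strip:
  fixes m :: nat
  assumes m: "2 \<le> m" and d: "d < h" "a < m^d"
  defines "s \<equiv> fst (tree_point m h (Suc d, m * a)) + snd (tree_point m h (Suc d, m * a))"
  shows "tree_point m h ` tree_nodes m h \<inter> {p. s \<le> fst p + snd p \<and> fst p + snd p \<le> s + real m - 1}
       = tree_point m h ` children m (d, a)"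
proof (rule image_Int_eq_image)
  show "children m (d, a) \<subseteq> tree_nodes m h" using d by (rule children_subset_tree_nodes)
  fix p assume "p \<in> tree_nodes m h"
  then show "tree_point m h p \<in> {p. s \<le> fst p + snd p \<and> fst p + snd p \<le> s + real m - 1}
      \<longleftrightarrow> p \<in> children m (d, a)"
    using tree_point_in_children_strip_iff[OF m d] by (cases p) (simp add: s_def)
qed

lemma in_hyperedgesI:
  assumes "S \<in> R" "V \<inter> S = E" "card E = m"
  shows "E \<in> hyperedges V R m"
  unfolding hyperedges_def using assms by blast

lemma not_m_good_quadrants_strips:
  fixes m :: nat
  assumes m: "2 \<le> m"
  shows "\<not> m_good (sw_quadrants \<union> diag_strips) 2 m"
proof
  define h where "h = m - 1"
  let ?f = "tree_point m h"
  let ?V = "?f ` tree_nodes m h"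
  let ?H = "hyperedges ?V (sw_quadrants \<union> diag_strips) m"
  assume "m_good (sw_quadrants \<union> diag_strips) 2 m"
  then obtain c where poly: "polychromatic_coloring ?V ?H 2 c"
    unfolding m_good_def using finite_tree_nodes general_position_tree_points[OF m] by blast
  have inj: "inj_on ?f (tree_nodes m h)" using m by (intro inj_on_tree_point) simp
  have "?f (0, 0) \<in> ?V" by (simp add: tree_nodes_def)
  moreover have "?f ` children m (d, a) \<in> ?H" if "d < h" "a < m^d" for d a
  proof (rule in_hyperedgesI)
    let ?s = "fst (?f (Suc d, m * a)) + snd (?f (Suc d, m * a))"
    show "{p. ?s \<le> fst p + snd p \<and> fst p + snd p \<le> ?s + real m - 1} \<in> sw_quadrants \<union> diag_strips"
      unfolding diag_strips_def by blast
    show "?V \<inter> {p. ?s \<le> fst p + snd p \<and> fst p + snd p \<le> ?s + real m - 1} = ?f ` children m (d, a)"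
      using tree_points_in_strip[OF m that] by simp
    show "card (?f ` children m (d, a)) = m"
      using inj_on_subset[OF inj children_subset_tree_nodes[OF that]]
      by (simp add: card_image card_children)
  qed
  moreover have "?f ` branch m h b \<in> ?H" if "b < m^h" for b
  proof (rule in_hyperedgesI)
    let ?q = "?f (h, b)"
    show "{p. fst p \<le> fst ?q \<and> snd p \<le> snd ?q} \<in> sw_quadrants \<union> diag_strips"
      unfolding sw_quadrants_def by blast
    show "?V \<inter> {p. fst p \<le> fst ?q \<and> snd p \<le> snd ?q} = ?f ` branch m h b"
      using tree_points_in_quadrant[OF _ that] m by simp
    show "card (?f ` branch m h b) = m"
      using inj_on_subset[OF inj branch_subset_tree_nodes[OF that]] m
      by (simp add: card_image card_branch h_def)
  qed
  ultimately have "\<not> polychromatic_coloring ?V ?H 2 c"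
    by (rule tree_hyperedges_not_polychromatic)
  then show False using poly by contradiction
qed

lemma polychromatic_coloring_le_card:
  assumes "polychromatic_coloring V H k c" "E \<in> H" "finite E"
  shows "k \<le> card E"
proof -
  have "{..<k} \<subseteq> c ` E" using assms(1,2) by (force simp: polychromatic_coloring_def)
  then have "card {..<k} \<le> card (c ` E)" using assms(3) by (intro card_mono) simp_all
  also have "\<dots> \<le> card E" using assms(3) by (rule card_image_le)
  finally show ?thesis by simp
qed

lemma m_good_sw_quadrants_imp_le:
  assumes "sw_quadrants \<subseteq> R" "m_good R k m"
  shows "k \<le> m"
proof -
  define V where "V = (\<lambda>i. (real i, real i)) ` {..<m}"
  have "finite V" "general_position V"
    by (auto simp: V_def general_position_def inj_on_def)
  then obtain c where poly: "polychromatic_coloring V (hyperedges V R m) k c"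
    using assms(2) by (auto simp: m_good_def)
  have inj: "inj_on (\<lambda>i. (real i, real i)) {..<m}" by (simp add: inj_on_def)
  have card: "card V = m" using card_image[OF inj] by (simp add: V_def)
  have "V \<in> hyperedges V R m"
  proof (rule in_hyperedgesI)
    show "{p. fst p \<le> real m \<and> snd p \<le> real m} \<in> R"
      using assms(1) unfolding sw_quadrants_def by blast
    show "V \<inter> {p. fst p \<le> real m \<and> snd p \<le> real m} = V" by (auto simp: V_def)
    show "card V = m" by (rule card)
  qed
  then show ?thesis
    using polychromatic_coloring_le_card[OF poly _ \<open>finite V\<close>] card by simp
qed

theorem corollary7:
  shows "m_R (sw_quadrants \<union> diag_strips) 2 = \<infinity>"
proof -
  have "\<not> m_good (sw_quadrants \<union> diag_strips) 2 m" for m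
  proof (cases "2 \<le> m")
    case True
    then show ?thesis by (rule not_m_good_quadrants_strips)
  next
    case False
    then show ?thesis using m_good_sw_quadrants_imp_le[of "sw_quadrants \<union> diag_strips" 2 m] by auto
  qed
  then show ?thesis by (simp add: m_R_def)
qed

end
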